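(* Let $D\ge1$ and let $\mathcal{F}$ be a collection of pairwise non-overlapping $D$-simplices on $\gamma_D$ whose vertex sets have union exactly $A$, $|A|=n$, and suppose $\mathcal{F}$ is non-extendable. Then there is a collection $\mathcal{F}'\supseteq\mathcal{F}$ of pairwise non-overlapping $D$-simplices on $\gamma_D$ whose vertex sets have union a set of exactly $n+1$ points of $\gamma_D$, such that $\mathcal{F}'$ is non-extendable.
   Context: $\gamma_D=\{(t,t^2,\dots,t^D):t\in\mathbb{R}\}$. A $D$-simplex on $\gamma_D$ is $\mathrm{conv}(\sigma)$ for $\sigma\subseteq\gamma_D$, $|\sigma|=D+1$. Simplices overlap if $\mathrm{conv}(\sigma)\cap\mathrm{conv}(\tau)\supsetneq\mathrm{conv}(\sigma\cap\tau)$. A collection of simplices on $\gamma_D$ whose vertex sets have union $A$ is non-extendable if there is no triangulation of $\mathrm{conv}(A)$ (geometric simplicial complex with union $\mathrm{conv}(A)$) all of whose vertices lie in $A$ and which contains every simplex of the collection. *)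

theory Defs
  imports "HOL-Analysis.Analysis"
begin

text \<open>The ambient space is real^'n with D = CARD('n) (so D >= 1 automatically).
  The coordinates are indexed by 'n via a fixed bijection onto {0..<D};
  coordinate idx i carries the power t^(idx i + 1).\<close>

definition coord_idx :: "'n::finite \<Rightarrow> nat" where
  "coord_idx = (SOME f. bij_betw f (UNIV :: 'n set) {..<CARD('n)})"

definition moment :: "real \<Rightarrow> real ^ 'n::finite" where
  "moment t = (\<chi> i. t ^ Suc (coord_idx i))"

definition moment_curve :: "(real ^ 'n::finite) set" where
  "moment_curve = range moment"

definition curve_simplex :: "(real ^ 'n::finite) set \<Rightarrow> bool" where
  "curve_simplex \<sigma> \<longleftrightarrow> \<sigma> \<subseteq> moment_curve \<and> finite \<sigma> \<and> card \<sigma> = CARD('n) + 1"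

definition overlap :: "(real ^ 'n::finite) set \<Rightarrow> (real ^ 'n) set \<Rightarrow> bool" where
  "overlap \<sigma> \<tau> \<longleftrightarrow> convex hull (\<sigma> \<inter> \<tau>) \<subset> convex hull \<sigma> \<inter> convex hull \<tau>"

definition pairwise_nonoverlapping :: "(real ^ 'n::finite) set set \<Rightarrow> bool" where
  "pairwise_nonoverlapping F \<longleftrightarrow> (\<forall>\<sigma>\<in>F. \<forall>\<tau>\<in>F. \<sigma> \<noteq> \<tau> \<longrightarrow> \<not> overlap \<sigma> \<tau>)"

definition non_extendable :: "(real ^ 'n::finite) set set \<Rightarrow> bool" where
  "non_extendable F \<longleftrightarrow>
     \<not> (\<exists>T. simplicial_complex T \<and> \<Union>T = convex hull (\<Union>F) \<and>
            (\<forall>S\<in>T. \<forall>v. v extreme_point_of S \<longrightarrow> v \<in> \<Union>F) \<and>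
            (\<forall>\<sigma>\<in>F. convex hull \<sigma> \<in> T))"

end

theory Submission
  imports Defs
begin

text \<open>Choose a point \<open>p\<close> of the moment curve outside \<open>conv A\<close> (far enough along the curve, its
  last coordinate exceeds that of every point of \<open>A\<close>) and add to \<open>F\<close> the cones from \<open>p\<close> over
  the facets of \<open>conv A\<close> visible from \<open>p\<close>. Since a hyperplane meets the moment curve in at
  most \<open>D\<close> points, each visible facet has exactly \<open>D\<close> vertices, so these cones are
  \<open>D\<close>-simplices on the curve. The supporting hyperplane of a visible facet separates \<open>p\<close>
  from \<open>conv A\<close>, which makes the new simplices meet the old ones and each other only in common
  faces. If a triangulation of \<open>conv (A \<union> {p})\<close> contained all the new simplices, its cells
  avoiding \<open>p\<close> would triangulate \<open>conv A\<close> and extend \<open>F\<close>.\<close>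

section \<open>Hyperplane sections of the moment curve\<close>

lemma coord_idx_bij: "bij_betw (coord_idx :: 'n::finite \<Rightarrow> nat) UNIV {..<CARD('n)}"
proof -
  have "\<exists>f. bij_betw f (UNIV::'n set) {..<CARD('n)}"
    using ex_bij_betw_finite_nat[of "UNIV::'n set"] by (simp add: lessThan_atLeast0)
  then show ?thesis
    unfolding coord_idx_def by (rule someI_ex)
qed

lemma moment_component:
  assumes "j < CARD('n)"
  obtains k :: "'n::finite" where "\<And>t. moment t $ k = t ^ Suc j"
proof -
  obtain k :: 'n where "coord_idx k = j"
    using assms coord_idx_bij[where 'n='n] unfolding bij_betw_def by (metis imageE lessThan_iff)
  then show ?thesis
    using that[of k] by (simp add: moment_def)
qed

lemma moment_curve_hyperplane_roots:
  fixes a :: "real^'n::finite"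
  assumes "a \<noteq> 0"
  shows "finite {t. a \<bullet> moment t = b}" "card {t. a \<bullet> moment t = b} \<le> CARD('n)"
proof -
  let ?D = "CARD('n)"
  let ?inv = "inv_into (UNIV::'n set) coord_idx"
  have bij: "bij_betw (coord_idx :: 'n \<Rightarrow> nat) UNIV {..<?D}"
    by (rule coord_idx_bij)
  \<comment> \<open>\<open>a \<bullet> moment t - b\<close> is a nonzero polynomial in \<open>t\<close> of degree at most \<open>D\<close>,
    with coefficients \<open>c\<close>\<close>
  define c where "c k = (if k = 0 then - b else if k \<le> ?D then a $ ?inv (k - 1) else 0)" for k
  have poly: "(\<Sum>k\<le>?D. c k * t ^ k) = a \<bullet> moment t - b" for t
  proof -
    obtain m where m: "?D = Suc m"
      using zero_less_card_finite not0_implies_Suc by blast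
    have "(\<Sum>k\<le>?D. c k * t ^ k) = - b + (\<Sum>j<?D. a $ ?inv j * t ^ Suc j)"
      unfolding m sum.atMost_Suc_shift by (simp add: c_def m lessThan_Suc_atMost)
    also have "(\<Sum>j<?D. a $ ?inv j * t ^ Suc j) = (\<Sum>i\<in>UNIV. a $ i * t ^ Suc (coord_idx i))"
      using sum.reindex_bij_betw[OF bij, of "\<lambda>j. a $ ?inv j * t ^ Suc j"] bij
      by (simp add: bij_betw_def)
    also have "\<dots> = a \<bullet> moment t"
      by (simp add: inner_vec_def moment_def)
    finally show ?thesis
      by simp
  qed
  obtain i where i: "a $ i \<noteq> 0"
    using assms by (metis vec_eq_iff zero_index)
  have "coord_idx i < ?D" "inj (coord_idx :: 'n \<Rightarrow> nat)"
    using bij unfolding bij_betw_def by auto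
  then have nonzero: "c (Suc (coord_idx i)) \<noteq> 0" "Suc (coord_idx i) \<le> ?D"
    using i by (auto simp: c_def)
  have "{t. a \<bullet> moment t = b} = {t. (\<Sum>k\<le>?D. c k * t ^ k) = 0}"
    using poly by auto
  then show "finite {t. a \<bullet> moment t = b}" "card {t. a \<bullet> moment t = b} \<le> ?D"
    using polyfun_roots_finite[of c, OF nonzero] polyfun_roots_card[of c, OF nonzero] by auto
qed

lemma moment_curve_Int_hyperplane_card:
  fixes B :: "(real^'n::finite) set"
  assumes "B \<subseteq> moment_curve" "a \<noteq> 0" "\<forall>x\<in>B. a \<bullet> x = b"
  shows "finite B" "card B \<le> CARD('n)"
proof -
  let ?R = "{t. a \<bullet> moment t = b}"
  have sub: "B \<subseteq> moment ` ?R"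
    using assms unfolding moment_curve_def by auto
  then show "finite B"
    using moment_curve_hyperplane_roots(1)[OF assms(2)] finite_subset by blast
  have "card B \<le> card (moment ` ?R :: (real^'n) set)"
    using sub moment_curve_hyperplane_roots(1)[OF assms(2)] by (simp add: card_mono)
  also have "\<dots> \<le> card ?R"
    using moment_curve_hyperplane_roots(1)[OF assms(2)] by (rule card_image_le)
  finally show "card B \<le> CARD('n)"
    using moment_curve_hyperplane_roots(2)[OF assms(2), of b] by linarith
qed

lemma affine_hull_curve_simplex:
  fixes \<sigma> :: "(real^'n::finite) set"
  assumes "curve_simplex \<sigma>"
  shows "affine hull \<sigma> = UNIV"
proof -
  have "aff_dim \<sigma> = int DIM(real^'n)"
  proof (rule ccontr)
    assume "aff_dim \<sigma> \<noteq> int DIM(real^'n)"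
    then have "aff_dim \<sigma> < int DIM(real^'n)"
      using aff_dim_le_DIM[of \<sigma>] by linarith
    then obtain a b where "a \<noteq> 0" "\<sigma> \<subseteq> {x. a \<bullet> x = b}"
      by (rule aff_lowdim_subset_hyperplane)
    then have "card \<sigma> \<le> CARD('n)"
      using assms moment_curve_Int_hyperplane_card(2)[of \<sigma> a b] unfolding curve_simplex_def by auto
    then show False
      using assms unfolding curve_simplex_def by simp
  qed
  then show ?thesis
    using aff_dim_eq_full by blast
qed

lemma affine_hull_Union_curve_simplices:
  fixes F :: "(real^'n::finite) set set"
  assumes "\<forall>\<sigma>\<in>F. curve_simplex \<sigma>" "F \<noteq> {}"
  shows "affine hull (\<Union>F) = UNIV"
proof -
  obtain \<sigma> where "\<sigma> \<in> F"
    using assms(2) by blast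
  then have "affine hull \<sigma> \<subseteq> affine hull (\<Union>F)"
    by (intro hull_mono) blast
  moreover have "affine hull \<sigma> = UNIV"
    using assms(1) \<open>\<sigma> \<in> F\<close> by (simp add: affine_hull_curve_simplex)
  ultimately show ?thesis
    by auto
qed

lemma moment_curve_point_outside_convex_hull:
  fixes A :: "(real^'n::finite) set"
  assumes "finite A" "A \<subseteq> moment_curve"
  obtains p where "p \<in> moment_curve" "p \<notin> convex hull A"
proof -
  let ?D = "CARD('n)"
  obtain k1 :: 'n where "\<And>t. moment t $ k1 = t ^ Suc 0"
    using moment_component[of 0] by auto
  then have k1: "moment t $ k1 = t" for t
    by simp
  obtain k0 :: 'n where "\<And>t. moment t $ k0 = t ^ Suc (?D - 1)"
    using moment_component[where 'n='n, of "?D - 1"] by auto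
  then have k0: "moment t $ k0 = t ^ ?D" for t
    by simp
  define t0 where "t0 = 1 + (\<Sum>z\<in>A. \<bar>z $ k1\<bar>)"
  have "z $ k0 < t0 ^ ?D" if z: "z \<in> A" for z
  proof -
    obtain t where t: "z = moment t"
      using z assms(2) unfolding moment_curve_def by blast
    have "\<bar>t\<bar> \<le> (\<Sum>z\<in>A. \<bar>z $ k1\<bar>)"
      using member_le_sum[of z A "\<lambda>z. \<bar>z $ k1\<bar>"] z assms(1) by (simp add: t k1)
    then have "\<bar>t\<bar> ^ ?D < t0 ^ ?D"
      unfolding t0_def by (intro power_strict_mono) auto
    moreover have "t ^ ?D \<le> \<bar>t\<bar> ^ ?D"
      by (metis abs_ge_self power_abs)
    ultimately show ?thesis
      by (simp add: t k0)
  qed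
  then have "convex hull A \<subseteq> {x. axis k0 1 \<bullet> x < t0 ^ ?D}"
    using convex_halfspace_lt[of "axis k0 (1::real)" "t0 ^ ?D"]
    by (intro hull_minimal) (auto simp: inner_axis' inner_real_def)
  moreover have "axis k0 1 \<bullet> (moment t0 :: real^'n) = t0 ^ ?D"
    by (simp add: inner_axis' inner_real_def k0)
  ultimately have "moment t0 \<notin> convex hull A"
    by force
  then show ?thesis
    using that unfolding moment_curve_def by blast
qed

section \<open>Faces of a polytope visible from an outside point\<close>

definition visible_face :: "'a::real_inner set \<Rightarrow> 'a \<Rightarrow> 'a set \<Rightarrow> bool" where
  "visible_face A p \<tau> \<longleftrightarrow> (\<exists>a b. (\<forall>z\<in>A. a \<bullet> z \<le> b) \<and> b < a \<bullet> p \<and> \<tau> = {z\<in>A. a \<bullet> z = b})"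

lemma convex_hull_subset_halfspace_le:
  "\<forall>x\<in>S. a \<bullet> x \<le> b \<Longrightarrow> convex hull S \<subseteq> {x. a \<bullet> x \<le> b}"
  by (intro hull_minimal) (auto simp: convex_halfspace_le)

lemma convex_hull_subset_hyperplane:
  "\<forall>x\<in>S. a \<bullet> x = b \<Longrightarrow> convex hull S \<subseteq> {x. a \<bullet> x = b}"
  by (intro hull_minimal) (auto simp: convex_hyperplane)

lemma convex_hull_Int_supporting_hyperplane:
  fixes B :: "'a::euclidean_space set"
  assumes "finite B" "\<forall>x\<in>B. a \<bullet> x \<le> b"
  shows "convex hull B \<inter> {x. a \<bullet> x = b} = convex hull {x\<in>B. a \<bullet> x = b}"
proof
  have "(convex hull B \<inter> {x. a \<bullet> x = b}) face_of convex hull B"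
    using convex_hull_subset_halfspace_le[OF assms(2)]
    by (intro face_of_Int_supporting_hyperplane_le) auto
  then obtain B' where B': "B' \<subseteq> B" "convex hull B \<inter> {x. a \<bullet> x = b} = convex hull B'"
    using face_of_convex_hull_subset finite_imp_compact[OF assms(1)] by metis
  then have "B' \<subseteq> {x\<in>B. a \<bullet> x = b}"
    using hull_subset[of B' convex] by auto
  then show "convex hull B \<inter> {x. a \<bullet> x = b} \<subseteq> convex hull {x\<in>B. a \<bullet> x = b}"
    using B'(2) hull_mono by metis
  show "convex hull {x\<in>B. a \<bullet> x = b} \<subseteq> convex hull B \<inter> {x. a \<bullet> x = b}"
    using hull_mono[of "{x\<in>B. a \<bullet> x = b}" B] convex_hull_subset_hyperplane[of "{x\<in>B. a \<bullet> x = b}"]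
    by auto
qed

lemma mem_convex_hull_insertE:
  assumes "z \<in> convex hull (insert p \<tau>)" "\<tau> \<noteq> {}"
  obtains u y where "0 \<le> u" "u \<le> 1" "y \<in> convex hull \<tau>" "z = (1 - u) *\<^sub>R p + u *\<^sub>R y"
proof -
  obtain y where "y \<in> convex hull \<tau>" "z \<in> closed_segment p y"
    using assms by (auto simp: convex_hull_insert_segments)
  then show ?thesis
    using that by (auto simp: in_segment)
qed

lemma segment_weight_le_of_hyperplane:
  fixes p :: "'a::real_inner"
  assumes "a \<bullet> y1 = b" "a \<bullet> y2 \<le> b" "b < a \<bullet> p" "0 \<le> u2"
    and "(1 - u1) *\<^sub>R p + u1 *\<^sub>R y1 = (1 - u2) *\<^sub>R p + u2 *\<^sub>R y2"
  shows "u2 \<le> u1"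
proof -
  have "(1 - u1) * (a \<bullet> p) + u1 * b = (1 - u2) * (a \<bullet> p) + u2 * (a \<bullet> y2)"
    using arg_cong[OF assms(5), of "inner a"] assms(1) by (simp add: inner_add_right)
  also have "\<dots> \<le> (1 - u2) * (a \<bullet> p) + u2 * b"
    using mult_left_mono[OF assms(2,4)] by simp
  finally have "u2 * (a \<bullet> p - b) \<le> u1 * (a \<bullet> p - b)"
    by (simp add: algebra_simps)
  then show ?thesis
    using assms(3) by simp
qed

lemma mem_convex_hull_insert_below_hyperplane:
  fixes p :: "'a::real_inner"
  assumes "\<forall>x\<in>\<tau>. a \<bullet> x = b" "b < a \<bullet> p" "z \<in> convex hull (insert p \<tau>)" "a \<bullet> z \<le> b"
  shows "z \<in> convex hull \<tau>"
proof (cases "\<tau> = {}")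
  case True
  then show ?thesis
    using assms(2-4) by simp
next
  case False
  obtain u y where uy: "0 \<le> u" "u \<le> 1" "y \<in> convex hull \<tau>" "z = (1 - u) *\<^sub>R p + u *\<^sub>R y"
    using assms(3) False by (rule mem_convex_hull_insertE)
  have "a \<bullet> y = b"
    using convex_hull_subset_hyperplane[OF assms(1)] uy(3) by auto
  then have "1 \<le> u"
    by (rule segment_weight_le_of_hyperplane[OF _ assms(4) assms(2)]) (simp_all add: uy(4))
  then show ?thesis
    using uy by simp
qed

lemma convex_hull_face_of_convex_hull_insert:
  fixes p :: "'a::real_inner"
  assumes "\<forall>x\<in>\<tau>. a \<bullet> x = b" "b < a \<bullet> p"
  shows "convex hull \<tau> face_of convex hull (insert p \<tau>)"
proof -
  have "convex hull (insert p \<tau>) \<subseteq> {x. a \<bullet> x \<ge> b}"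
    using assms by (intro hull_minimal) (auto simp: convex_halfspace_ge)
  then have "(convex hull (insert p \<tau>) \<inter> {x. a \<bullet> x = b}) face_of convex hull (insert p \<tau>)"
    by (intro face_of_Int_supporting_hyperplane_ge) auto
  moreover have "convex hull (insert p \<tau>) \<inter> {x. a \<bullet> x = b} = convex hull \<tau>"
    using mem_convex_hull_insert_below_hyperplane[OF assms] hull_mono[of \<tau> "insert p \<tau>"]
      convex_hull_subset_hyperplane[OF assms(1)] by fastforce
  ultimately show ?thesis
    by simp
qed

lemma convex_hull_Int_visible_cone:
  fixes A :: "'a::euclidean_space set"
  assumes "finite \<sigma>" "\<sigma> \<subseteq> A" "visible_face A p \<tau>"
  shows "convex hull \<sigma> \<inter> convex hull (insert p \<tau>) \<subseteq> convex hull (\<sigma> \<inter> insert p \<tau>)"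
proof
  obtain a b where ab: "\<forall>z\<in>A. a \<bullet> z \<le> b" "b < a \<bullet> p" "\<tau> = {z\<in>A. a \<bullet> z = b}"
    using assms(3) unfolding visible_face_def by blast
  fix z assume z: "z \<in> convex hull \<sigma> \<inter> convex hull (insert p \<tau>)"
  have below: "\<forall>x\<in>\<sigma>. a \<bullet> x \<le> b"
    using assms(2) ab(1) by blast
  then have "a \<bullet> z \<le> b"
    using convex_hull_subset_halfspace_le z by blast
  then have "z \<in> convex hull \<tau>"
    using mem_convex_hull_insert_below_hyperplane[of \<tau> a b p z] ab(2,3) z by blast
  then have "a \<bullet> z = b"
    using convex_hull_subset_hyperplane[of \<tau> a b] ab(3) by auto
  then have "z \<in> convex hull {x\<in>\<sigma>. a \<bullet> x = b}"
    using convex_hull_Int_supporting_hyperplane[OF assms(1) below] z by blast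
  moreover have "{x\<in>\<sigma>. a \<bullet> x = b} \<subseteq> \<sigma> \<inter> insert p \<tau>"
    using assms(2) ab(3) by blast
  ultimately show "z \<in> convex hull (\<sigma> \<inter> insert p \<tau>)"
    using hull_mono by blast
qed

lemma visible_cones_segment_weight_eq:
  assumes "visible_face A p \<tau>1" "visible_face A p \<tau>2"
    and "y1 \<in> convex hull \<tau>1" "y2 \<in> convex hull \<tau>2" "0 \<le> u1" "0 \<le> u2"
    and "(1 - u1) *\<^sub>R p + u1 *\<^sub>R y1 = (1 - u2) *\<^sub>R p + u2 *\<^sub>R y2"
  shows "u1 = u2"
proof -
  obtain a1 b1 where ab1: "\<forall>z\<in>A. a1 \<bullet> z \<le> b1" "b1 < a1 \<bullet> p" "\<tau>1 = {z\<in>A. a1 \<bullet> z = b1}"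
    using assms(1) unfolding visible_face_def by blast
  obtain a2 b2 where ab2: "\<forall>z\<in>A. a2 \<bullet> z \<le> b2" "b2 < a2 \<bullet> p" "\<tau>2 = {z\<in>A. a2 \<bullet> z = b2}"
    using assms(2) unfolding visible_face_def by blast
  have "a1 \<bullet> y1 = b1" "a2 \<bullet> y2 = b2"
    using convex_hull_subset_hyperplane[of \<tau>1 a1 b1] convex_hull_subset_hyperplane[of \<tau>2 a2 b2]
      assms(3,4) ab1(3) ab2(3) by auto
  moreover have "a1 \<bullet> y2 \<le> b1" "a2 \<bullet> y1 \<le> b2"
    using convex_hull_subset_halfspace_le[of \<tau>2 a1 b1] convex_hull_subset_halfspace_le[of \<tau>1 a2 b2]
      assms(3,4) ab1 ab2 by auto
  ultimately have "u2 \<le> u1" "u1 \<le> u2"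
    using segment_weight_le_of_hyperplane[of a1 y1 b1 y2 p u2 u1]
      segment_weight_le_of_hyperplane[of a2 y2 b2 y1 p u1 u2] ab1(2) ab2(2) assms(5-7) by auto
  then show ?thesis
    by simp
qed

lemma convex_hull_Int_visible_cones:
  fixes A :: "'a::euclidean_space set"
  assumes "finite A" "visible_face A p \<tau>1" "visible_face A p \<tau>2"
  shows "convex hull (insert p \<tau>1) \<inter> convex hull (insert p \<tau>2) \<subseteq> convex hull (insert p \<tau>1 \<inter> insert p \<tau>2)"
    (is "_ \<subseteq> ?H")
proof
  have pH: "p \<in> ?H"
    by (simp add: hull_inc)
  fix z assume z: "z \<in> convex hull (insert p \<tau>1) \<inter> convex hull (insert p \<tau>2)"
  show "z \<in> ?H"
  proof (cases "\<tau>1 = {} \<or> \<tau>2 = {}")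
    case True
    then show ?thesis
      using z pH by auto
  next
    case False
    then obtain u1 y1 u2 y2 where
      uy1: "0 \<le> u1" "u1 \<le> 1" "y1 \<in> convex hull \<tau>1" "z = (1 - u1) *\<^sub>R p + u1 *\<^sub>R y1" and
      uy2: "0 \<le> u2" "u2 \<le> 1" "y2 \<in> convex hull \<tau>2" "z = (1 - u2) *\<^sub>R p + u2 *\<^sub>R y2"
      using z by (metis IntD1 IntD2 mem_convex_hull_insertE)
    have u: "u1 = u2"
      using visible_cones_segment_weight_eq[OF assms(2,3) uy1(3) uy2(3) uy1(1) uy2(1)] uy1(4) uy2(4)
      by simp
    show ?thesis
    proof (cases "u1 = 0")
      case True
      then show ?thesis
        using uy1(4) pH by simp
    next
      case False
      then have "y1 = y2"
        using uy1(4) uy2(4) u by simp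
      obtain a2 b2 where ab2: "\<forall>z\<in>A. a2 \<bullet> z \<le> b2" "\<tau>2 = {z\<in>A. a2 \<bullet> z = b2}"
        using assms(3) unfolding visible_face_def by blast
      have "y1 \<in> convex hull \<tau>1 \<inter> {x. a2 \<bullet> x = b2}"
        using uy1(3) uy2(3) \<open>y1 = y2\<close> convex_hull_subset_hyperplane[of \<tau>2 a2 b2] ab2(2) by auto
      also have "\<dots> = convex hull {x\<in>\<tau>1. a2 \<bullet> x = b2}"
        using assms(1,2) ab2(1) unfolding visible_face_def
        by (intro convex_hull_Int_supporting_hyperplane) auto
      also have "\<dots> \<subseteq> ?H"
        using assms(2) ab2(2) unfolding visible_face_def by (intro hull_mono) auto
      finally have "y1 \<in> ?H" .
      then show ?thesis
        using uy1 pH convexD[OF convex_convex_hull] by (metis diff_ge_0_iff_ge diff_add_cancel)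
    qed
  qed
qed

lemma polyhedron_facet_halfspaces:
  fixes K :: "'a::euclidean_space set"
  assumes "polyhedron K" "affine hull K = UNIV"
  obtains H :: "'a set set" and a b where "finite H" "K = (\<Inter>h\<in>H. {x. a h \<bullet> x \<le> b h})"
    "\<And>h. h \<in> H \<Longrightarrow> (K \<inter> {x. a h \<bullet> x = b h}) facet_of K"
proof -
  obtain H where H: "finite H" "K = affine hull K \<inter> \<Inter>H"
      "\<forall>h\<in>H. \<exists>a b. a \<noteq> 0 \<and> h = {x. a \<bullet> x \<le> b}" "\<And>H'. H' \<subset> H \<Longrightarrow> K \<subset> affine hull K \<inter> \<Inter>H'"
    using assms(1) unfolding polyhedron_Int_affine_minimal by blast
  then obtain a b where ab: "\<And>h. h \<in> H \<Longrightarrow> a h \<noteq> 0 \<and> h = {x. a h \<bullet> x \<le> b h}"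
    by metis
  have "\<Inter>H = (\<Inter>h\<in>H. {x. a h \<bullet> x \<le> b h})"
    using ab by blast
  then have "K = (\<Inter>h\<in>H. {x. a h \<bullet> x \<le> b h})"
    using H(2) assms(2) by simp
  moreover have "(K \<inter> {x. a h \<bullet> x = b h}) facet_of K" if "h \<in> H" for h
    using facet_of_polyhedron_explicit[OF H(1,2) ab H(4)] that by blast
  ultimately show ?thesis
    using that H(1) by blast
qed

text \<open>Walking from \<open>p\<close> towards \<open>x\<close>, the first of the violated constraints to become
  tight is the one with the largest crossing parameter \<open>s\<close>.\<close>
lemma segment_exit_halfspaces:
  fixes a :: "'i \<Rightarrow> 'a::real_inner"
  assumes "finite H" "\<forall>h\<in>H. a h \<bullet> x \<le> b h" "h1 \<in> H" "b h1 < a h1 \<bullet> p"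
  obtains h y where "h \<in> H" "b h < a h \<bullet> p" "a h \<bullet> y = b h" "\<forall>h'\<in>H. a h' \<bullet> y \<le> b h'"
    "y \<in> closed_segment p x"
proof -
  define I where "I = {h\<in>H. b h < a h \<bullet> p}"
  define s where "s h = (a h \<bullet> p - b h) / (a h \<bullet> p - a h \<bullet> x)" for h
  obtain h0 where h0: "h0 \<in> I" "\<forall>h\<in>I. s h \<le> s h0"
    using ex_is_arg_min_if_finite[of I "\<lambda>h. - s h"] assms(1,3,4)
    by (auto simp: I_def is_arg_min_linorder)
  define M where "M = s h0"
  have h0H: "h0 \<in> H" "b h0 < a h0 \<bullet> p"
    using h0(1) by (auto simp: I_def)
  have x_below: "a h0 \<bullet> x \<le> b h0"
    using h0H assms(2) by blast
  then have "0 < M" "M \<le> 1"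
    using h0H unfolding M_def s_def by (auto simp: divide_le_eq_1)
  define y where "y = (1 - M) *\<^sub>R p + M *\<^sub>R x"
  have inner_y: "a h \<bullet> y = a h \<bullet> p - M * (a h \<bullet> p - a h \<bullet> x)" for h
    by (simp add: y_def inner_add_right algebra_simps)
  have "a h0 \<bullet> y = b h0"
    using h0H x_below unfolding inner_y M_def s_def by (simp add: divide_simps)
  moreover have "a h \<bullet> y \<le> b h" if "h \<in> H" for h
  proof (cases "h \<in> I")
    case True
    then have "s h \<le> M" "0 < a h \<bullet> p - a h \<bullet> x"
      using h0(2) assms(2) that unfolding M_def I_def by fastforce+
    then have "a h \<bullet> p - b h \<le> M * (a h \<bullet> p - a h \<bullet> x)"
      unfolding s_def by (simp add: pos_divide_le_eq)
    then show ?thesis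
      unfolding inner_y by simp
  next
    case False
    then have "(1 - M) * (a h \<bullet> p) + M * (a h \<bullet> x) \<le> (1 - M) * b h + M * b h"
      using that assms(2) \<open>0 < M\<close> \<open>M \<le> 1\<close> unfolding I_def
      by (intro add_mono mult_left_mono) auto
    then show ?thesis
      unfolding inner_y by (simp add: algebra_simps)
  qed
  moreover have "y \<in> closed_segment p x"
    unfolding y_def in_segment using \<open>0 < M\<close> \<open>M \<le> 1\<close> by (intro exI[of _ M]) auto
  ultimately show ?thesis
    using that h0H by blast
qed

lemma visible_face_crossing_segment:
  fixes A :: "'a::euclidean_space set"
  assumes "finite A" "affine hull A = UNIV" "p \<notin> convex hull A" "x \<in> convex hull A"
  obtains \<tau> y where "visible_face A p \<tau>" "int DIM('a) - 1 \<le> aff_dim \<tau>"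
    "y \<in> convex hull \<tau>" "y \<in> closed_segment p x"
proof -
  let ?K = "convex hull A"
  have "polyhedron ?K" "affine hull ?K = UNIV"
    using assms(1,2) by (auto simp: polyhedron_convex_hull affine_hull_convex_hull)
  then obtain H :: "'a set set" and a b where H: "finite H" "?K = (\<Inter>h\<in>H. {x. a h \<bullet> x \<le> b h})"
      "\<And>h. h \<in> H \<Longrightarrow> (?K \<inter> {x. a h \<bullet> x = b h}) facet_of ?K"
    using polyhedron_facet_halfspaces by blast
  obtain h1 where "h1 \<in> H" "b h1 < a h1 \<bullet> p"
    using assms(3) H(2) by (auto simp: not_le)
  then obtain h y where hy: "h \<in> H" "b h < a h \<bullet> p" "a h \<bullet> y = b h" "\<forall>h'\<in>H. a h' \<bullet> y \<le> b h'"
      "y \<in> closed_segment p x"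
    using segment_exit_halfspaces[OF H(1), of a x b h1 p] assms(4) H(2) by blast
  define \<tau> where "\<tau> = {z\<in>A. a h \<bullet> z = b h}"
  have A_below: "\<forall>z\<in>A. a h \<bullet> z \<le> b h"
    using hull_subset[of A convex] H(2) hy(1) by blast
  have facet_eq: "?K \<inter> {z. a h \<bullet> z = b h} = convex hull \<tau>"
    unfolding \<tau>_def using assms(1) A_below by (rule convex_hull_Int_supporting_hyperplane)
  have "visible_face A p \<tau>"
    unfolding visible_face_def \<tau>_def using A_below hy(2) by blast
  moreover have "int DIM('a) - 1 \<le> aff_dim \<tau>"
  proof -
    have "aff_dim ?K = int DIM('a)"
      using \<open>affine hull ?K = UNIV\<close> aff_dim_eq_full by blast
    then show ?thesis
      using H(3)[OF hy(1)] unfolding facet_of_def facet_eq aff_dim_convex_hull by simp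
  qed
  moreover have "y \<in> convex hull \<tau>"
    using hy H(2) facet_eq by blast
  ultimately show ?thesis
    using that hy(5) by blast
qed

section \<open>Triangulations of a polytope enlarged by one point\<close>

lemma simplicial_complex_convex_compact:
  "simplicial_complex T \<Longrightarrow> S \<in> T \<Longrightarrow> convex S \<and> compact S"
  unfolding simplicial_complex_def by (meson convex_simplex compact_simplex)

lemma simplicial_complex_avoiding:
  "simplicial_complex T \<Longrightarrow> simplicial_complex {S\<in>T. p \<notin> S}"
  unfolding simplicial_complex_def by (auto dest: face_of_imp_subset)

text \<open>A point \<open>x\<close> of \<open>conv A\<close> lying in a cell \<open>S\<close> through the apex \<open>p\<close>: the segment from
  \<open>p\<close> to \<open>x\<close> enters \<open>conv A\<close> through a visible facet \<open>\<tau>\<close>, and since the cone over \<open>\<tau>\<close>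
  meets \<open>S\<close> in a face, \<open>x\<close> lies in that cone and hence in the cell \<open>conv \<tau>\<close>.\<close>
lemma mem_cell_avoiding_apex:
  fixes A :: "'a::euclidean_space set"
  assumes T: "simplicial_complex T"
    and cones: "\<And>\<tau>. visible_face A p \<tau> \<Longrightarrow> int DIM('a) - 1 \<le> aff_dim \<tau> \<Longrightarrow>
                     convex hull (insert p \<tau>) \<in> T"
    and A: "finite A" "affine hull A = UNIV" "p \<notin> convex hull A"
    and x: "x \<in> convex hull A" "S \<in> T" "x \<in> S"
  obtains S' where "S' \<in> T" "p \<notin> S'" "x \<in> S'"
proof (cases "p \<in> S")
  case False
  then show ?thesis
    using that x by blast
next
  case True
  obtain \<tau> y where \<tau>: "visible_face A p \<tau>" "int DIM('a) - 1 \<le> aff_dim \<tau>"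
      and y: "y \<in> convex hull \<tau>" "y \<in> closed_segment p x"
    using visible_face_crossing_segment[OF A x(1)] by blast
  obtain a b where ab: "\<forall>z\<in>A. a \<bullet> z \<le> b" "b < a \<bullet> p" "\<tau> = {z\<in>A. a \<bullet> z = b}"
    using \<tau>(1) unfolding visible_face_def by blast
  have on_hyperplane: "\<forall>z\<in>\<tau>. a \<bullet> z = b"
    using ab(3) by simp
  define C where "C = convex hull (insert p \<tau>)"
  have C: "C \<in> T"
    unfolding C_def using cones[OF \<tau>] .
  have hull_\<tau>: "convex hull \<tau> \<subseteq> convex hull A"
    using ab(3) by (intro hull_mono) auto
  have yC: "y \<in> C"
    using y(1) hull_mono[of \<tau> "insert p \<tau>"] unfolding C_def by blast
  have "x \<in> C"
  proof (cases "y = x")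
    case True
    then show ?thesis
      using yC by simp
  next
    case False
    have "y \<noteq> p"
      using y(1) hull_\<tau> A(3) by blast
    then have "y \<in> open_segment p x"
      using y(2) False unfolding open_segment_def by blast
    moreover have "y \<in> S"
      using closed_segment_subset[OF True x(3)] simplicial_complex_convex_compact[OF T x(2)] y(2)
      by blast
    moreover have "(S \<inter> C) face_of S"
      using T x(2) C unfolding simplicial_complex_def by blast
    ultimately show ?thesis
      using face_ofD[of "S \<inter> C" S y p x] True x(3) yC by blast
  qed
  moreover have "a \<bullet> x \<le> b"
    using convex_hull_subset_halfspace_le[OF ab(1)] x(1) by blast
  ultimately have "x \<in> convex hull \<tau>"
    using mem_convex_hull_insert_below_hyperplane[OF on_hyperplane ab(2)] unfolding C_def by blast
  moreover have "convex hull \<tau> \<in> T"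
    using convex_hull_face_of_convex_hull_insert[OF on_hyperplane ab(2)] T C
    unfolding simplicial_complex_def C_def by blast
  moreover have "p \<notin> convex hull \<tau>"
    using hull_\<tau> A(3) by blast
  ultimately show ?thesis
    using that by blast
qed

lemma Union_cells_avoiding_apex:
  fixes A :: "'a::euclidean_space set"
  assumes T: "simplicial_complex T" "\<Union>T = convex hull (insert p A)"
      "\<forall>S\<in>T. \<forall>v. v extreme_point_of S \<longrightarrow> v \<in> insert p A"
    and cones: "\<And>\<tau>. visible_face A p \<tau> \<Longrightarrow> int DIM('a) - 1 \<le> aff_dim \<tau> \<Longrightarrow>
                     convex hull (insert p \<tau>) \<in> T"
    and A: "finite A" "affine hull A = UNIV" "p \<notin> convex hull A"
  shows "\<Union>{S\<in>T. p \<notin> S} = convex hull A"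
proof
  show "\<Union>{S\<in>T. p \<notin> S} \<subseteq> convex hull A"
  proof clarify
    fix x S assume S: "S \<in> T" "p \<notin> S" "x \<in> S"
    have "{v. v extreme_point_of S} \<subseteq> A"
      using T(3) S(1,2) extreme_point_of_def by fastforce
    moreover have "S = convex hull {v. v extreme_point_of S}"
      using Krein_Milman_Minkowski simplicial_complex_convex_compact[OF T(1) S(1)] by blast
    ultimately show "x \<in> convex hull A"
      using S(3) hull_mono by blast
  qed
  show "convex hull A \<subseteq> \<Union>{S\<in>T. p \<notin> S}"
  proof
    fix x assume x: "x \<in> convex hull A"
    then obtain S where "S \<in> T" "x \<in> S"
      using T(2) hull_mono[of A "insert p A"] by blast
    then show "x \<in> \<Union>{S\<in>T. p \<notin> S}"
      using mem_cell_avoiding_apex[OF T(1) cones A x] by blast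
  qed
qed

section \<open>Extending families of simplices on the moment curve\<close>

text \<open>On the moment curve, the facets of \<open>conv A\<close> visible from \<open>p\<close> are the visible faces with
  \<open>D\<close> vertices (cf. \<open>card_visible_face_moment_curve\<close>).\<close>
definition visible_cones :: "(real^'n::finite) set \<Rightarrow> real^'n \<Rightarrow> (real^'n) set set" where
  "visible_cones A p = {insert p \<tau> | \<tau>. visible_face A p \<tau> \<and> card \<tau> = CARD('n)}"

lemma card_visible_face_moment_curve:
  fixes A :: "(real^'n::finite) set"
  assumes "A \<subseteq> moment_curve" "visible_face A p \<tau>" "int DIM(real^'n) - 1 \<le> aff_dim \<tau>"
  shows "card \<tau> = CARD('n)"
proof -
  obtain a b where ab: "\<forall>z\<in>A. a \<bullet> z \<le> b" "b < a \<bullet> p" "\<tau> = {z\<in>A. a \<bullet> z = b}"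
    using assms(2) unfolding visible_face_def by blast
  have "\<tau> \<noteq> {}"
  proof
    assume "\<tau> = {}"
    then show False
      using assms(3) by simp
  qed
  then obtain z where "z \<in> A" "a \<bullet> z = b"
    using ab(3) by blast
  then have "a \<noteq> 0"
    using ab(2) by auto
  moreover have "\<tau> \<subseteq> moment_curve" "\<forall>x\<in>\<tau>. a \<bullet> x = b"
    using assms(1) ab(3) by auto
  ultimately have "finite \<tau>" "card \<tau> \<le> CARD('n)"
    using moment_curve_Int_hyperplane_card by blast+
  moreover have "aff_dim \<tau> \<le> int (card \<tau>) - 1"
    using \<open>finite \<tau>\<close> by (rule aff_dim_le_card)
  ultimately show ?thesis
    using assms(3) by simp
qed

lemma visible_cones_curve_simplex:
  fixes A :: "(real^'n::finite) set"
  assumes "A \<subseteq> moment_curve" "p \<in> moment_curve" "p \<notin> convex hull A" "\<sigma> \<in> visible_cones A p"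
  shows "curve_simplex \<sigma>"
proof -
  obtain \<tau> where \<tau>: "\<sigma> = insert p \<tau>" "visible_face A p \<tau>" "card \<tau> = CARD('n)"
    using assms(4) unfolding visible_cones_def by blast
  have "\<tau> \<subseteq> A"
    using \<tau>(2) unfolding visible_face_def by blast
  then have "p \<notin> \<tau>"
    using assms(3) hull_inc[of p A convex] by blast
  have "finite \<tau>"
    using \<tau>(3) by (intro card_ge_0_finite) simp
  then have "card \<sigma> = CARD('n) + 1"
    using \<open>p \<notin> \<tau>\<close> \<tau>(1,3) by simp
  moreover have "\<sigma> \<subseteq> moment_curve"
    using \<open>\<tau> \<subseteq> A\<close> assms(1,2) \<tau>(1) by blast
  ultimately show ?thesis
    using \<open>finite \<tau>\<close> \<tau>(1) unfolding curve_simplex_def by simp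
qed

lemma Union_visible_cones:
  fixes A :: "(real^'n::finite) set"
  assumes "finite A" "A \<subseteq> moment_curve" "affine hull A = UNIV" "p \<notin> convex hull A"
  shows "A \<union> \<Union>(visible_cones A p) = insert p A"
proof -
  have "A \<noteq> {}"
    using assms(3) by auto
  then obtain x where "x \<in> A"
    by blast
  then obtain \<tau> y where \<tau>: "visible_face A p \<tau>" "int DIM(real^'n) - 1 \<le> aff_dim \<tau>"
      "y \<in> convex hull \<tau>" "y \<in> closed_segment p x"
    by (rule visible_face_crossing_segment[OF assms(1,3,4) hull_inc])
  then have "insert p \<tau> \<in> visible_cones A p"
    using card_visible_face_moment_curve[OF assms(2) \<tau>(1,2)] unfolding visible_cones_def by blast
  moreover have "\<sigma> \<subseteq> insert p A" if "\<sigma> \<in> visible_cones A p" for \<sigma>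
    using that unfolding visible_cones_def visible_face_def by blast
  ultimately show ?thesis
    by blast
qed

lemma not_overlapI:
  "convex hull \<sigma> \<inter> convex hull \<tau> \<subseteq> convex hull (\<sigma> \<inter> \<tau>) \<Longrightarrow> \<not> overlap \<sigma> \<tau>"
  unfolding overlap_def by blast

lemma overlap_commute: "overlap \<sigma> \<tau> \<longleftrightarrow> overlap \<tau> \<sigma>"
  unfolding overlap_def by (simp add: Int_commute)

lemma pairwise_nonoverlapping_Un_visible_cones:
  fixes A :: "(real^'n::finite) set"
  assumes "finite A" "pairwise_nonoverlapping F" "\<forall>\<sigma>\<in>F. finite \<sigma> \<and> \<sigma> \<subseteq> A"
  shows "pairwise_nonoverlapping (F \<union> visible_cones A p)"
proof -
  have cell_cone: "\<not> overlap \<sigma> (insert p \<tau>)" if "\<sigma> \<in> F" "visible_face A p \<tau>" for \<sigma> \<tau>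
    using assms(3) that by (intro not_overlapI convex_hull_Int_visible_cone) auto
  have cone_cone: "\<not> overlap (insert p \<tau>1) (insert p \<tau>2)"
    if "visible_face A p \<tau>1" "visible_face A p \<tau>2" for \<tau>1 \<tau>2
    using assms(1) that by (intro not_overlapI convex_hull_Int_visible_cones)
  show ?thesis
    using assms(2) cell_cone cone_cone
    unfolding pairwise_nonoverlapping_def visible_cones_def by (auto simp: overlap_commute)
qed

lemma non_extendable_imp_nonempty: "non_extendable F \<Longrightarrow> F \<noteq> {}"
  unfolding non_extendable_def by (auto simp: simplicial_complex_def intro!: exI[of _ "{}"])

lemma non_extendable_Un_visible_cones:
  fixes A :: "(real^'n::finite) set"
  assumes F: "non_extendable F" "\<Union>F = A"
    and A: "finite A" "A \<subseteq> moment_curve" "affine hull A = UNIV" "p \<notin> convex hull A"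
  shows "non_extendable (F \<union> visible_cones A p)"
  unfolding non_extendable_def
proof
  assume "\<exists>T. simplicial_complex T \<and> \<Union>T = convex hull \<Union>(F \<union> visible_cones A p) \<and>
      (\<forall>S\<in>T. \<forall>v. v extreme_point_of S \<longrightarrow> v \<in> \<Union>(F \<union> visible_cones A p)) \<and>
      (\<forall>\<sigma>\<in>F \<union> visible_cones A p. convex hull \<sigma> \<in> T)"
  moreover have "\<Union>(F \<union> visible_cones A p) = insert p A"
    using Union_visible_cones[OF A] F(2) by auto
  ultimately obtain T where T: "simplicial_complex T" "\<Union>T = convex hull (insert p A)"
      "\<forall>S\<in>T. \<forall>v. v extreme_point_of S \<longrightarrow> v \<in> insert p A"
      "\<forall>\<sigma>\<in>F \<union> visible_cones A p. convex hull \<sigma> \<in> T"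
    by (metis (no_types, lifting))
  have cones: "convex hull (insert p \<tau>) \<in> T"
    if "visible_face A p \<tau>" "int DIM(real^'n) - 1 \<le> aff_dim \<tau>" for \<tau>
    using T(4) card_visible_face_moment_curve[OF A(2) that] that(1)
    unfolding visible_cones_def by blast
  have "convex hull \<sigma> \<in> {S\<in>T. p \<notin> S}" if "\<sigma> \<in> F" for \<sigma>
    using T(4) that F(2) A(4) hull_mono[of \<sigma> A] by blast
  moreover have "v \<in> A" if "S \<in> {S\<in>T. p \<notin> S}" "v extreme_point_of S" for S v
    using T(3) that extreme_point_of_def by fastforce
  moreover note simplicial_complex_avoiding[OF T(1)]
    Union_cells_avoiding_apex[OF T(1-3) cones A(1,3,4)]
  ultimately have "\<not> non_extendable F"
    unfolding non_extendable_def F(2) by blast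
  then show False
    using F(1) by simp
qed

theorem proposition4p2:
  fixes F :: "(real ^ 'n::finite) set set" and A :: "(real ^ 'n) set" and n :: nat
  assumes "\<forall>\<sigma>\<in>F. curve_simplex \<sigma>"
    and "pairwise_nonoverlapping F"
    and "\<Union>F = A" and "finite A" and "card A = n"
    and "non_extendable F"
  shows "\<exists>F'. F \<subseteq> F' \<and> (\<forall>\<sigma>\<in>F'. curve_simplex \<sigma>) \<and> pairwise_nonoverlapping F' \<and>
              finite (\<Union>F') \<and> card (\<Union>F') = n + 1 \<and> non_extendable F'"
proof -
  have A_curve: "A \<subseteq> moment_curve" and cells: "\<forall>\<sigma>\<in>F. finite \<sigma> \<and> \<sigma> \<subseteq> A"
    using assms(1,3) unfolding curve_simplex_def by auto
  have full: "affine hull A = UNIV"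
    using affine_hull_Union_curve_simplices[OF assms(1) non_extendable_imp_nonempty[OF assms(6)]]
    unfolding assms(3) .
  obtain p where p: "p \<in> moment_curve" "p \<notin> convex hull A"
    using moment_curve_point_outside_convex_hull[OF assms(4) A_curve] by blast
  define F' where "F' = F \<union> visible_cones A p"
  have "\<Union>F' = insert p A"
    using Union_visible_cones[OF assms(4) A_curve full p(2)] assms(3) unfolding F'_def by auto
  moreover have "p \<notin> A"
    using p(2) hull_inc[of p A convex] by blast
  moreover have "\<forall>\<sigma>\<in>F'. curve_simplex \<sigma>"
    using assms(1) visible_cones_curve_simplex[OF A_curve p] unfolding F'_def by blast
  moreover have "pairwise_nonoverlapping F'"
    unfolding F'_def using assms(4,2) cells by (rule pairwise_nonoverlapping_Un_visible_cones)
  moreover have "non_extendable F'"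
    unfolding F'_def using assms(6,3,4) A_curve full p(2) by (rule non_extendable_Un_visible_cones)
  ultimately show ?thesis
    using assms(4,5) unfolding F'_def by auto
qed

end
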